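(* Let $\Sigma\in\mathbb{R}^{p\times p}$ with $\Sigma\succ0$, $\theta_0\in\mathbb{R}^p$, $S=\mathrm{supp}(\theta_0)$, and for $\xi>0$ let $\widehat\theta^\infty(\xi)$ be the unique minimizer of $\theta\mapsto\frac12\langle\theta-\theta_0,\Sigma(\theta-\theta_0)\rangle+\xi\|\theta\|_1$. Then there exist $\xi_0=\xi_0(\Sigma,S,\theta_0)>0$, $T_0\subseteq[p]$, $v_0\in\{-1,0,+1\}^p$ such that for all $\xi\in(0,\xi_0)$, $\mathrm{sign}(\widehat\theta^\infty(\xi))=v_0$ and $\mathrm{supp}(\widehat\theta^\infty(\xi))=\mathrm{supp}(v_0)=T_0$. Further $T_0\supseteq S$, $v_{0,S}=\mathrm{sign}(\theta_{0,S})$, and $\xi_0=\min_{i\in S}\big|\theta_{0,i}/[\Sigma_{T_0,T_0}^{-1}v_{0,T_0}]_i\big|$.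
   Context: $\mathrm{sign}(u)_i=+1,0,-1$ according as $u_i>0,=0,<0$; $A_{I,J}$ is the submatrix with rows in $I$, columns in $J$; $A_{I,I}^{-1}=(A_{I,I})^{-1}$; $v_I$ is restriction to $I$. *)

theory Defs
  imports "HOL-Analysis.Analysis" "HOL-Library.Extended_Real"
begin

definition pos_def :: "real^'p^'p \<Rightarrow> bool" where
  "pos_def A \<longleftrightarrow> transpose A = A \<and> (\<forall>x. x \<noteq> 0 \<longrightarrow> x \<bullet> (A *v x) > 0)"

definition supp :: "real^'p \<Rightarrow> 'p set" where
  "supp x = {i. x $ i \<noteq> 0}"

definition sign_vec :: "real^'p \<Rightarrow> real^'p" where
  "sign_vec x = (\<chi> i. sgn (x $ i))"

definition l1norm :: "real^'p \<Rightarrow> real" where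
  "l1norm x = (\<Sum>i\<in>UNIV. \<bar>x $ i\<bar>)"

definition lasso_obj :: "real^'p^'p \<Rightarrow> real^'p \<Rightarrow> real \<Rightarrow> real^'p \<Rightarrow> real" where
  "lasso_obj S \<theta>0 \<xi> \<theta> = (1/2) * ((\<theta> - \<theta>0) \<bullet> (S *v (\<theta> - \<theta>0))) + \<xi> * l1norm \<theta>"

definition lasso_inf :: "real^'p^'p \<Rightarrow> real^'p \<Rightarrow> real \<Rightarrow> real^'p" where
  "lasso_inf S \<theta>0 \<xi> = (THE \<theta>. \<forall>\<theta>'. lasso_obj S \<theta>0 \<xi> \<theta> \<le> lasso_obj S \<theta>0 \<xi> \<theta>')"

text \<open>Inverse of the principal submatrix A_{T,T}, with rows/columns labelled by the
original indices in T (entries outside T x T set to 0).\<close>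
definition sub_inv :: "real^'p^'p \<Rightarrow> 'p set \<Rightarrow> 'p \<Rightarrow> 'p \<Rightarrow> real" where
  "sub_inv A T = (THE B. (\<forall>i j. (i \<notin> T \<or> j \<notin> T) \<longrightarrow> B i j = 0) \<and>
      (\<forall>i\<in>T. \<forall>j\<in>T. (\<Sum>k\<in>T. A $ i $ k * B k j) = (if i = j then 1 else 0)) \<and>
      (\<forall>i\<in>T. \<forall>j\<in>T. (\<Sum>k\<in>T. B i k * A $ k $ j) = (if i = j then 1 else 0)))"

definition sub_inv_apply :: "real^'p^'p \<Rightarrow> 'p set \<Rightarrow> real^'p \<Rightarrow> 'p \<Rightarrow> real" where
  "sub_inv_apply A T v i = (\<Sum>j\<in>T. sub_inv A T i j * v $ j)"

end

theory Submission
  imports Defs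
begin

text \<open>As \<open>\<xi> \<rightarrow> 0\<close> the Lasso solution behaves like \<open>\<theta>0 + \<xi> z\<close>, where \<open>z\<close> minimises the
  limiting problem \<open>1/2 \<langle>z, \<Sigma> z\<rangle> + \<Sum>(i\<in>S) sgn(\<theta>0 i) z i + \<Sum>(i\<notin>S) |z i|\<close>, obtained by expanding
  the \<open>\<ell>1\<close> norm to first order around \<open>\<theta>0\<close>. The optimality conditions of this problem say that
  \<open>-\<Sigma> z\<close> is a subgradient of the \<open>\<ell>1\<close> norm at \<open>\<theta>0 + \<xi> z\<close>, as long as adding \<open>\<xi> z\<close> does not
  change the signs on \<open>S\<close>, i.e. for \<open>\<xi> < min(i\<in>S) |\<theta>0 i / z i|\<close>; so \<open>\<theta>0 + \<xi> z\<close> is then the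
  Lasso solution. On \<open>T0 = S \<union> supp z\<close> these conditions read \<open>\<Sigma>(T0,T0) z(T0) = -v0(T0)\<close>,
  which turns the bound on \<open>\<xi>\<close> into the stated formula for \<open>\<xi>0\<close>.\<close>

definition quad_form :: "real^'n^'n \<Rightarrow> real^'n \<Rightarrow> real" where
  "quad_form A x = x \<bullet> (A *v x)"

lemma symmetric_matrix_inner_commute:
  fixes A :: "real^'n^'n"
  assumes "transpose A = A"
  shows "x \<bullet> (A *v y) = y \<bullet> (A *v x)"
proof -
  have "y \<bullet> (A *v x) = (y v* A) \<bullet> x" by (simp add: dot_lmul_matrix)
  also have "y v* A = transpose A *v y" by simp
  finally show ?thesis using assms by (simp add: inner_commute)
qed

lemma quad_form_add:
  assumes "transpose A = A"
  shows "quad_form A (x + y) = quad_form A x + 2 * (x \<bullet> (A *v y)) + quad_form A y"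
  using symmetric_matrix_inner_commute[OF assms, of x y]
  by (simp add: quad_form_def matrix_vector_right_distrib inner_add_left inner_add_right)

lemma quad_form_scaleR: "quad_form A (t *\<^sub>R x) = t\<^sup>2 * quad_form A x"
  by (simp add: quad_form_def matrix_vector_mult_scaleR power2_eq_square)

lemma continuous_on_quad_form: "continuous_on X (quad_form A)"
  unfolding quad_form_def
  by (intro continuous_intros linear_continuous_on) (simp add: linear_linear[symmetric])

lemma pos_def_quad_form_pos: "pos_def A \<Longrightarrow> x \<noteq> 0 \<Longrightarrow> quad_form A x > 0"
  by (simp add: pos_def_def quad_form_def)

lemma pos_def_quad_form_nonneg: "pos_def A \<Longrightarrow> quad_form A x \<ge> 0"
  by (cases "x = 0") (auto simp: quad_form_def dest: pos_def_quad_form_pos less_imp_le)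

lemma pos_def_quad_form_lower_bound:
  fixes A :: "real^'n^'n"
  assumes "pos_def A"
  obtains l where "l > 0" "\<And>x. quad_form A x \<ge> l * (norm x)\<^sup>2"
proof -
  have "sphere (0::real^'n) 1 \<noteq> {}"
    by (metis empty_iff mem_sphere_0 norm_axis_1)
  then obtain x0 where x0: "x0 \<in> sphere 0 1" "\<And>y. y \<in> sphere 0 1 \<Longrightarrow> quad_form A x0 \<le> quad_form A y"
    using continuous_attains_inf[OF compact_sphere _ continuous_on_quad_form] by blast
  have "quad_form A x \<ge> quad_form A x0 * (norm x)\<^sup>2" for x
  proof (cases "x = 0")
    case True
    then show ?thesis by (simp add: quad_form_def)
  next
    case False
    then have "quad_form A x0 \<le> quad_form A ((1 / norm x) *\<^sub>R x)" by (intro x0(2)) simp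
    also have "\<dots> = quad_form A x / (norm x)\<^sup>2" by (simp add: quad_form_scaleR power_divide)
    finally show ?thesis using False by (simp add: pos_le_divide_eq)
  qed
  moreover have "quad_form A x0 > 0"
  proof -
    have "x0 \<noteq> 0" using x0(1) by auto
    then show ?thesis by (rule pos_def_quad_form_pos[OF assms])
  qed
  ultimately show ?thesis using that by blast
qed

lemma sum_abs_components_le: "(\<Sum>j\<in>UNIV. \<bar>(x::real^'n) $ j\<bar>) \<le> real CARD('n) * norm x"
proof -
  have "(\<Sum>j\<in>UNIV. \<bar>x $ j\<bar>) \<le> (\<Sum>j\<in>(UNIV::'n set). norm x)"
    by (intro sum_mono component_le_norm_cart)
  then show ?thesis by simp
qed

lemma separably_penalized_quad_form_has_min:
  fixes A :: "real^'n^'n" and \<phi> :: "'n \<Rightarrow> real \<Rightarrow> real"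
  assumes "pos_def A"
    and lower: "\<And>j x. \<phi> j x \<ge> -\<bar>x\<bar>" and cont: "\<And>j. continuous_on UNIV (\<phi> j)"
    and zero: "\<And>j. \<phi> j 0 = 0"
  defines "F \<equiv> \<lambda>w. 1/2 * quad_form A w + (\<Sum>j\<in>UNIV. \<phi> j (w $ j))"
  obtains z where "\<And>w. F z \<le> F w"
proof -
  obtain l where l: "l > 0" "\<And>x. quad_form A x \<ge> l * (norm x)\<^sup>2"
    using pos_def_quad_form_lower_bound[OF assms(1)] by blast
  define C where "C = real CARD('n)"
  define R where "R = 2 * C / l + 1"
  have R: "R > 0" using l(1) by (simp add: R_def C_def add_nonneg_pos)
  have lower_F: "F w \<ge> l/2 * (norm w)\<^sup>2 - C * norm w" for w
  proof -
    have "(\<Sum>j\<in>UNIV. \<phi> j (w $ j)) \<ge> (\<Sum>j\<in>UNIV. -\<bar>w $ j\<bar>)" by (intro sum_mono lower)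
    moreover have "(\<Sum>j\<in>UNIV. -\<bar>w $ j\<bar>) \<ge> - (C * norm w)"
      using sum_abs_components_le[of w] by (simp add: sum_negf C_def)
    ultimately show ?thesis using l(2)[of w] by (simp add: F_def)
  qed
  have bound_pos: "l/2 * (norm w)\<^sup>2 - C * norm w > 0" if "norm w > R" for w
  proof -
    have "l * norm w > 2 * C" using that l by (simp add: R_def field_simps)
    then have "norm w * (l/2 * norm w - C) > 0" using that R by (intro mult_pos_pos) auto
    then show ?thesis by (simp add: algebra_simps power2_eq_square)
  qed
  have outside: "F w > 0" if "norm w > R" for w
    using lower_F[of w] bound_pos[OF that] by linarith
  have "continuous_on (cball 0 R) F"
    unfolding F_def
    by (intro continuous_intros continuous_on_quad_form continuous_on_compose2[OF cont]) auto
  moreover have "cball (0::real^'n) R \<noteq> {}" using R by simp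
  ultimately obtain z where z: "z \<in> cball 0 R" "\<And>y. y \<in> cball 0 R \<Longrightarrow> F z \<le> F y"
    using continuous_attains_inf[OF compact_cball] by blast
  have "F z \<le> F 0" using z(2) R by simp
  also have "F 0 = 0" by (simp add: F_def quad_form_def zero)
  finally have "F z \<le> F w" for w
    using z(2)[of w] outside[of w] by (cases "w \<in> cball 0 R") auto
  then show ?thesis by (rule that)
qed

lemma sum_update_component:
  fixes \<phi> :: "'n::finite \<Rightarrow> real \<Rightarrow> real"
  shows "(\<Sum>j\<in>UNIV. \<phi> j ((z + t *\<^sub>R axis i 1) $ j))
           = (\<Sum>j\<in>UNIV. \<phi> j (z $ j)) + (\<phi> i (z $ i + t) - \<phi> i (z $ i))"
proof -
  have "(\<Sum>j\<in>UNIV. \<phi> j ((z + t *\<^sub>R axis i 1) $ j) - \<phi> j (z $ j))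
      = (\<Sum>j\<in>UNIV. if j = i then \<phi> i (z $ i + t) - \<phi> i (z $ i) else 0)"
    by (intro sum.cong) (auto simp: axis_def)
  then show ?thesis by (simp add: sum_subtractf)
qed

lemma separably_penalized_quad_form_min_coordinate:
  fixes A :: "real^'n^'n" and \<phi> :: "'n \<Rightarrow> real \<Rightarrow> real"
  assumes "transpose A = A"
    and "\<And>w. 1/2 * quad_form A z + (\<Sum>j\<in>UNIV. \<phi> j (z $ j))
               \<le> 1/2 * quad_form A w + (\<Sum>j\<in>UNIV. \<phi> j (w $ j))"
  shows "0 \<le> (A *v z) $ i * t + (quad_form A (axis i 1) / 2) * t\<^sup>2 + (\<phi> i (z $ i + t) - \<phi> i (z $ i))"
proof -
  have "quad_form A (z + t *\<^sub>R axis i 1) = quad_form A z + 2 * t * (A *v z) $ i + t\<^sup>2 * quad_form A (axis i 1)"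
    using quad_form_add[OF assms(1), of z "t *\<^sub>R axis i 1"]
      symmetric_matrix_inner_commute[OF assms(1), of z "axis i 1"]
    by (simp add: quad_form_scaleR matrix_vector_mult_scaleR inner_axis inner_axis')
  then show ?thesis
    using assms(2)[of "z + t *\<^sub>R axis i 1"] unfolding sum_update_component
    by (simp add: algebra_simps)
qed

lemma nonneg_on_right_imp_linear_coeff_nonneg:
  fixes c b \<epsilon> :: real
  assumes "\<epsilon> > 0" and nonneg: "\<And>t. 0 < t \<Longrightarrow> t < \<epsilon> \<Longrightarrow> 0 \<le> c * t + b * t\<^sup>2"
  shows "0 \<le> c"
proof (rule ccontr)
  assume "\<not> 0 \<le> c"
  define t where "t = min (\<epsilon>/2) (-c / (2 * \<bar>b\<bar> + 1))"
  have t: "0 < t" "t < \<epsilon>" using \<open>\<not> 0 \<le> c\<close> assms(1) by (auto simp: t_def divide_neg_pos)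
  have "t \<le> -c / (2 * \<bar>b\<bar> + 1)" by (simp add: t_def)
  then have "t * (2 * \<bar>b\<bar> + 1) \<le> -c" by (simp only: pos_le_divide_eq)
  with t have "\<bar>b\<bar> * t < -c/2" by (simp add: algebra_simps)
  moreover have "b * t \<le> \<bar>b\<bar> * t" using t by (simp add: mult_right_mono)
  ultimately have "c + b * t < 0" using \<open>\<not> 0 \<le> c\<close> by linarith
  with t have "t * (c + b * t) < 0" by (simp add: mult_pos_neg)
  with nonneg[OF t] show False by (simp add: algebra_simps power2_eq_square)
qed

lemma nonneg_near_zero_imp_linear_coeff_zero:
  fixes c b \<epsilon> :: real
  assumes "\<epsilon> > 0" and nonneg: "\<And>t. \<bar>t\<bar> < \<epsilon> \<Longrightarrow> 0 \<le> c * t + b * t\<^sup>2"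
  shows "c = 0"
proof -
  have "0 \<le> c" using nonneg_on_right_imp_linear_coeff_nonneg[of \<epsilon> c b] assms by auto
  moreover have "0 \<le> -c"
    using nonneg_on_right_imp_linear_coeff_nonneg[of \<epsilon> "-c" b] assms(1) nonneg[of "-_"] by auto
  ultimately show ?thesis by simp
qed

lemma nonneg_with_abs_imp_abs_coeff_le:
  fixes c b :: real
  assumes nonneg: "\<And>t. 0 \<le> c * t + b * t\<^sup>2 + \<bar>t\<bar>"
  shows "\<bar>c\<bar> \<le> 1"
proof -
  have "0 \<le> c + 1"
  proof (rule nonneg_on_right_imp_linear_coeff_nonneg[of 1 _ b])
    fix t :: real assume "0 < t"
    then show "0 \<le> (c + 1) * t + b * t\<^sup>2" using nonneg[of t] by (simp add: algebra_simps)
  qed simp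
  moreover have "0 \<le> 1 - c"
  proof (rule nonneg_on_right_imp_linear_coeff_nonneg[of 1 _ b])
    fix t :: real assume "0 < t"
    then show "0 \<le> (1 - c) * t + b * t\<^sup>2" using nonneg[of "- t"] by (simp add: algebra_simps)
  qed simp
  ultimately show ?thesis by linarith
qed

text \<open>With \<open>s = sign_vec \<theta>0\<close>, \<open>lasso_direction_penalty s j x\<close> is the first-order part of
  \<open>|\<theta>0 j + x| - |\<theta>0 j|\<close> for small \<open>x\<close>.\<close>

definition lasso_direction_penalty :: "real^'n \<Rightarrow> 'n \<Rightarrow> real \<Rightarrow> real" where
  "lasso_direction_penalty s j x = (if s $ j \<noteq> 0 then s $ j * x else \<bar>x\<bar>)"

lemma lasso_direction_obj_has_min:
  fixes A :: "real^'n^'n" and s :: "real^'n"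
  assumes "pos_def A" and "\<And>i. \<bar>s $ i\<bar> \<le> 1"
  obtains z where "\<And>w. 1/2 * quad_form A z + (\<Sum>j\<in>UNIV. lasso_direction_penalty s j (z $ j))
                       \<le> 1/2 * quad_form A w + (\<Sum>j\<in>UNIV. lasso_direction_penalty s j (w $ j))"
proof -
  let ?\<phi> = "lasso_direction_penalty s"
  have scaled: "\<bar>s $ j * x\<bar> \<le> \<bar>x\<bar>" for j x
    using assms(2)[of j] by (simp add: abs_mult mult_left_le_one_le)
  have lower: "?\<phi> j x \<ge> -\<bar>x\<bar>" for j x
    using abs_le_D2[OF scaled[of j x]] by (simp add: lasso_direction_penalty_def)
  have cont: "continuous_on UNIV (?\<phi> j)" for j
    by (cases "s $ j \<noteq> 0") (auto simp: lasso_direction_penalty_def intro!: continuous_intros)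
  have zero: "?\<phi> j 0 = 0" for j by (simp add: lasso_direction_penalty_def)
  show ?thesis
    by (rule separably_penalized_quad_form_has_min[of A ?\<phi>, OF assms(1) lower cont zero]) (rule that)
qed

lemma exists_lasso_direction:
  fixes A :: "real^'n^'n" and s :: "real^'n"
  assumes "pos_def A" and s_bound: "\<And>i. \<bar>s $ i\<bar> \<le> 1"
  obtains z where "\<And>i. \<bar>(A *v z) $ i\<bar> \<le> 1"
    and "\<And>i. s $ i \<noteq> 0 \<Longrightarrow> (A *v z) $ i = - s $ i"
    and "\<And>i. s $ i = 0 \<Longrightarrow> z $ i \<noteq> 0 \<Longrightarrow> (A *v z) $ i = - sgn (z $ i)"
proof -
  let ?\<phi> = "lasso_direction_penalty s"
  obtain z where "\<And>w. 1/2 * quad_form A z + (\<Sum>j\<in>UNIV. ?\<phi> j (z $ j))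
                       \<le> 1/2 * quad_form A w + (\<Sum>j\<in>UNIV. ?\<phi> j (w $ j))"
    using lasso_direction_obj_has_min[OF assms] by blast
  with assms(1) have coord: "0 \<le> (A *v z) $ i * t + (quad_form A (axis i 1) / 2) * t\<^sup>2
                                  + (?\<phi> i (z $ i + t) - ?\<phi> i (z $ i))" for i t
    by (intro separably_penalized_quad_form_min_coordinate) (simp_all add: pos_def_def)
  have on_s: "(A *v z) $ i = - s $ i" if "s $ i \<noteq> 0" for i
  proof -
    have "(A *v z) $ i + s $ i = 0"
    proof (rule nonneg_near_zero_imp_linear_coeff_zero[of 1 _ "quad_form A (axis i 1) / 2"])
      fix t :: real
      show "0 \<le> ((A *v z) $ i + s $ i) * t + quad_form A (axis i 1) / 2 * t\<^sup>2"
        using coord[of i t] that by (simp add: lasso_direction_penalty_def algebra_simps)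
    qed simp
    then show ?thesis by linarith
  qed
  have off_s: "(A *v z) $ i = - sgn (z $ i)" if "s $ i = 0" "z $ i \<noteq> 0" for i
  proof -
    have "(A *v z) $ i + sgn (z $ i) = 0"
    proof (rule nonneg_near_zero_imp_linear_coeff_zero[of "\<bar>z $ i\<bar>" _ "quad_form A (axis i 1) / 2"])
      fix t :: real assume "\<bar>t\<bar> < \<bar>z $ i\<bar>"
      then have "?\<phi> i (z $ i + t) - ?\<phi> i (z $ i) = sgn (z $ i) * t"
        using \<open>s $ i = 0\<close> by (cases "z $ i > 0") (auto simp: lasso_direction_penalty_def sgn_if)
      then show "0 \<le> ((A *v z) $ i + sgn (z $ i)) * t + quad_form A (axis i 1) / 2 * t\<^sup>2"
        using coord[of i t] by (simp add: algebra_simps)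
    qed (use \<open>z $ i \<noteq> 0\<close> in simp)
    then show ?thesis by linarith
  qed
  have "\<bar>(A *v z) $ i\<bar> \<le> 1" if "s $ i = 0" "z $ i = 0" for i
    using coord[of i] that
    by (intro nonneg_with_abs_imp_abs_coeff_le[where b = "quad_form A (axis i 1) / 2"]) (simp add: lasso_direction_penalty_def)
  with on_s off_s s_bound have bounded: "\<bar>(A *v z) $ i\<bar> \<le> 1" for i
    by (cases "s $ i = 0"; cases "z $ i = 0") (auto simp: abs_sgn_eq)
  show ?thesis by (rule that[OF bounded on_s off_s])
qed

definition is_sub_inv :: "real^'n^'n \<Rightarrow> 'n set \<Rightarrow> ('n \<Rightarrow> 'n \<Rightarrow> real) \<Rightarrow> bool" where
  "is_sub_inv A T B \<longleftrightarrow> (\<forall>i j. (i \<notin> T \<or> j \<notin> T) \<longrightarrow> B i j = 0) \<and>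
      (\<forall>i\<in>T. \<forall>j\<in>T. (\<Sum>k\<in>T. A $ i $ k * B k j) = (if i = j then 1 else 0)) \<and>
      (\<forall>i\<in>T. \<forall>j\<in>T. (\<Sum>k\<in>T. B i k * A $ k $ j) = (if i = j then 1 else 0))"

lemma is_sub_inv_unique:
  assumes "is_sub_inv A T B1" "is_sub_inv A T B2"
  shows "B1 = B2"
proof (intro ext)
  fix i j
  show "B1 i j = B2 i j"
  proof (cases "i \<in> T \<and> j \<in> T")
    case False
    then show ?thesis using assms by (auto simp: is_sub_inv_def)
  next
    case True
    have "B1 i j = (\<Sum>k\<in>T. B1 i k * (if k = j then 1 else 0))"
      using True by (simp add: of_bool_def[symmetric])
    also have "\<dots> = (\<Sum>k\<in>T. B1 i k * (\<Sum>m\<in>T. A $ k $ m * B2 m j))"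
      using assms(2) True by (intro sum.cong) (auto simp: is_sub_inv_def)
    also have "\<dots> = (\<Sum>k\<in>T. \<Sum>m\<in>T. B1 i k * A $ k $ m * B2 m j)"
      by (simp add: sum_distrib_left mult.assoc)
    also have "\<dots> = (\<Sum>m\<in>T. (\<Sum>k\<in>T. B1 i k * A $ k $ m) * B2 m j)"
      by (subst sum.swap) (simp add: sum_distrib_right)
    also have "\<dots> = (\<Sum>m\<in>T. (if i = m then 1 else 0) * B2 m j)"
      using assms(1) True by (intro sum.cong) (auto simp: is_sub_inv_def)
    also have "\<dots> = B2 i j" using True by (simp add: of_bool_def[symmetric])
    finally show ?thesis .
  qed
qed

text \<open>Padding \<open>A(T,T)\<close> with the identity off \<open>T\<close> gives an invertible matrix whose inverse
  restricts to an inverse of \<open>A(T,T)\<close>.\<close>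

definition principal_pad :: "real^'n^'n \<Rightarrow> 'n set \<Rightarrow> real^'n^'n" where
  "principal_pad A T = (\<chi> i j. if i \<in> T \<and> j \<in> T then A $ i $ j else if i = j then 1 else 0)"

definition restrict_vec :: "'n set \<Rightarrow> real^'n \<Rightarrow> real^'n" where
  "restrict_vec T x = (\<chi> i. if i \<in> T then x $ i else 0)"

lemma principal_pad_mult_vec:
  "(principal_pad A T *v x) $ i = (if i \<in> T then (A *v restrict_vec T x) $ i else x $ i)"
proof (cases "i \<in> T")
  case True
  then show ?thesis
    unfolding principal_pad_def restrict_vec_def matrix_vector_mult_def by (auto intro!: sum.cong)
next
  case False
  have "(\<Sum>j\<in>UNIV. (if i = j then 1 else 0) * x $ j) = x $ i" by (simp add: of_bool_def[symmetric])
  with False show ?thesis by (simp add: principal_pad_def matrix_vector_mult_def)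
qed

lemma principal_pad_quad_form:
  "x \<bullet> (principal_pad A T *v x)
     = quad_form A (restrict_vec T x) + (\<Sum>i\<in>UNIV. if i \<in> T then 0 else (x $ i)\<^sup>2)"
proof -
  have "x \<bullet> (principal_pad A T *v x)
      = (\<Sum>i\<in>UNIV. (restrict_vec T x) $ i * (A *v restrict_vec T x) $ i + (if i \<in> T then 0 else (x $ i)\<^sup>2))"
    unfolding inner_vec_def principal_pad_mult_vec
    by (intro sum.cong) (auto simp: restrict_vec_def power2_eq_square)
  then show ?thesis by (simp add: sum.distrib quad_form_def inner_vec_def)
qed

lemma pos_def_principal_pad:
  assumes "pos_def A" "x \<noteq> 0"
  shows "x \<bullet> (principal_pad A T *v x) > 0"
proof (cases "restrict_vec T x = 0")
  case True
  with \<open>x \<noteq> 0\<close> obtain i where "i \<notin> T" "x $ i \<noteq> 0"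
    by (auto simp: restrict_vec_def vec_eq_iff split: if_splits)
  then have "(\<Sum>i\<in>UNIV. if i \<in> T then 0 else (x $ i)\<^sup>2) > 0"
    by (intro sum_pos2[where i=i]) auto
  with True show ?thesis by (simp add: principal_pad_quad_form quad_form_def)
next
  case False
  have "(\<Sum>i\<in>UNIV. if i \<in> T then 0 else (x $ i)\<^sup>2) \<ge> 0" by (intro sum_nonneg) auto
  with pos_def_quad_form_pos[OF assms(1) False] show ?thesis by (simp add: principal_pad_quad_form)
qed

lemma invertible_if_quad_pos:
  fixes M :: "real^'n^'n"
  assumes "\<And>x. x \<noteq> 0 \<Longrightarrow> x \<bullet> (M *v x) > 0"
  obtains B where "B ** M = mat 1" "M ** B = mat 1"
proof -
  have "\<forall>x. M *v x = 0 \<longrightarrow> x = 0" using assms by force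
  then obtain B where "B ** M = mat 1" using matrix_left_invertible_ker by blast
  then show ?thesis using that matrix_left_right_inverse by blast
qed

lemma exists_sub_inv:
  fixes A :: "real^'n^'n"
  assumes "pos_def A"
  obtains B where "is_sub_inv A T B"
proof -
  let ?M = "principal_pad A T"
  obtain C where C: "C ** ?M = mat 1" "?M ** C = mat 1"
    using invertible_if_quad_pos[of ?M, OF pos_def_principal_pad[OF assms]] by blast
  define B where "B i j = (if i \<in> T \<and> j \<in> T then C $ i $ j else 0)" for i j
  have "(\<Sum>k\<in>T. A $ i $ k * B k j) = (?M ** C) $ i $ j"
       "(\<Sum>k\<in>T. B i k * A $ k $ j) = (C ** ?M) $ i $ j" if "i \<in> T" "j \<in> T" for i j
    unfolding matrix_matrix_mult_def using that
    by (auto simp: principal_pad_def B_def intro: sum.mono_neutral_cong_left)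
  then have "is_sub_inv A T B" using C by (simp add: is_sub_inv_def B_def mat_def)
  then show ?thesis by (rule that)
qed

lemma sub_inv_is_sub_inv:
  assumes "pos_def A"
  shows "is_sub_inv A T (sub_inv A T)"
proof -
  obtain B where B: "is_sub_inv A T B" using exists_sub_inv[OF assms] .
  show ?thesis
    unfolding sub_inv_def is_sub_inv_def[symmetric]
    by (rule theI[of _ B]) (use B is_sub_inv_unique in auto)
qed

lemma sub_inv_apply_eqI:
  fixes A :: "real^'n^'n"
  assumes "pos_def A" and supp_z: "\<And>j. j \<notin> T \<Longrightarrow> z $ j = 0"
    and eq: "\<And>j. j \<in> T \<Longrightarrow> (A *v z) $ j = v $ j" and "i \<in> T"
  shows "sub_inv_apply A T v i = z $ i"
proof -
  let ?B = "sub_inv A T"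
  have Az: "(A *v z) $ j = (\<Sum>k\<in>T. A $ j $ k * z $ k)" for j
    unfolding matrix_vector_mult_def by (simp, rule sum.mono_neutral_cong_right) (auto simp: supp_z)
  have "sub_inv_apply A T v i = (\<Sum>j\<in>T. ?B i j * (\<Sum>k\<in>T. A $ j $ k * z $ k))"
    unfolding sub_inv_apply_def Az[symmetric] using eq by (intro sum.cong) auto
  also have "\<dots> = (\<Sum>j\<in>T. \<Sum>k\<in>T. ?B i j * A $ j $ k * z $ k)"
    by (simp add: sum_distrib_left mult.assoc)
  also have "\<dots> = (\<Sum>k\<in>T. (\<Sum>j\<in>T. ?B i j * A $ j $ k) * z $ k)"
    by (subst sum.swap) (simp add: sum_distrib_right)
  also have "\<dots> = (\<Sum>k\<in>T. (if i = k then 1 else 0) * z $ k)"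
    using sub_inv_is_sub_inv[OF assms(1)] \<open>i \<in> T\<close> by (intro sum.cong) (auto simp: is_sub_inv_def)
  also have "\<dots> = z $ i" using \<open>i \<in> T\<close> by (simp add: of_bool_def[symmetric])
  finally show ?thesis .
qed

lemma abs_subgradient:
  fixes h x y :: real
  assumes "\<bar>h\<bar> \<le> 1" "x \<noteq> 0 \<Longrightarrow> h = sgn x"
  shows "h * (y - x) \<le> \<bar>y\<bar> - \<bar>x\<bar>"
proof -
  have "h * y \<le> \<bar>y\<bar>"
    using assms(1) abs_le_D1[of "h * y" "\<bar>y\<bar>"] by (simp add: abs_mult mult_left_le_one_le)
  moreover have "h * x = \<bar>x\<bar>"
    using assms(2) by (cases "x = 0") (simp_all add: abs_sgn)
  ultimately show ?thesis by (simp add: algebra_simps)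
qed

text \<open>The hypotheses say that \<open>-A w\<close> is a subgradient of the \<open>\<ell>1\<close> norm at \<open>\<theta>0 + \<xi> w\<close>, so \<open>0\<close> is
  a subgradient of the Lasso objective there; its quadratic part yields the growth term.\<close>

lemma lasso_obj_growth:
  fixes A :: "real^'n^'n"
  assumes "transpose A = A" "\<xi> \<ge> 0"
    and bound: "\<And>i. \<bar>(A *v w) $ i\<bar> \<le> 1"
    and sign: "\<And>i. (\<theta>0 + \<xi> *\<^sub>R w) $ i \<noteq> 0 \<Longrightarrow> (A *v w) $ i = - sgn ((\<theta>0 + \<xi> *\<^sub>R w) $ i)"
  shows "lasso_obj A \<theta>0 \<xi> \<theta>
           \<ge> lasso_obj A \<theta>0 \<xi> (\<theta>0 + \<xi> *\<^sub>R w) + 1/2 * quad_form A (\<theta> - (\<theta>0 + \<xi> *\<^sub>R w))"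
proof -
  define d where "d = \<theta> - (\<theta>0 + \<xi> *\<^sub>R w)"
  have "- (A *v w) $ i * d $ i \<le> \<bar>\<theta> $ i\<bar> - \<bar>(\<theta>0 + \<xi> *\<^sub>R w) $ i\<bar>" for i
    using abs_subgradient[of "- (A *v w) $ i"] bound sign by (simp add: d_def)
  then have "- (d \<bullet> (A *v w)) \<le> l1norm \<theta> - l1norm (\<theta>0 + \<xi> *\<^sub>R w)"
    unfolding l1norm_def inner_vec_def sum_subtractf[symmetric] sum_negf[symmetric]
    by (intro sum_mono) (simp add: mult.commute)
  then have l1: "\<xi> * l1norm \<theta> \<ge> \<xi> * l1norm (\<theta>0 + \<xi> *\<^sub>R w) - \<xi> * (d \<bullet> (A *v w))"
    using mult_left_mono[OF _ \<open>\<xi> \<ge> 0\<close>] by (fastforce simp: algebra_simps)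
  have "\<theta> - \<theta>0 = \<xi> *\<^sub>R w + d" by (simp add: d_def)
  moreover have "(\<xi> *\<^sub>R w) \<bullet> (A *v d) = \<xi> * (d \<bullet> (A *v w))"
    using symmetric_matrix_inner_commute[OF assms(1), of w d] by simp
  ultimately have "quad_form A (\<theta> - \<theta>0) = quad_form A (\<xi> *\<^sub>R w) + 2 * (\<xi> * (d \<bullet> (A *v w))) + quad_form A d"
    using quad_form_add[OF assms(1), of "\<xi> *\<^sub>R w" d] by simp
  moreover have "lasso_obj A \<theta>0 \<xi> \<theta> = 1/2 * quad_form A (\<theta> - \<theta>0) + \<xi> * l1norm \<theta>"
    "lasso_obj A \<theta>0 \<xi> (\<theta>0 + \<xi> *\<^sub>R w) = 1/2 * quad_form A (\<xi> *\<^sub>R w) + \<xi> * l1norm (\<theta>0 + \<xi> *\<^sub>R w)"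
    by (simp_all add: lasso_obj_def quad_form_def)
  ultimately show ?thesis using l1 unfolding d_def[symmetric] by linarith
qed

lemma lasso_inf_eqI:
  fixes A :: "real^'n^'n"
  assumes "pos_def A" "\<xi> \<ge> 0"
    and "\<And>i. \<bar>(A *v w) $ i\<bar> \<le> 1"
    and "\<And>i. (\<theta>0 + \<xi> *\<^sub>R w) $ i \<noteq> 0 \<Longrightarrow> (A *v w) $ i = - sgn ((\<theta>0 + \<xi> *\<^sub>R w) $ i)"
  shows "lasso_inf A \<theta>0 \<xi> = \<theta>0 + \<xi> *\<^sub>R w"
proof -
  let ?\<theta> = "\<theta>0 + \<xi> *\<^sub>R w"
  have sym: "transpose A = A" using assms(1) by (simp add: pos_def_def)
  note growth = lasso_obj_growth[OF sym assms(2-4)]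
  show ?thesis
    unfolding lasso_inf_def
  proof (rule the_equality)
    show "\<forall>\<theta>. lasso_obj A \<theta>0 \<xi> ?\<theta> \<le> lasso_obj A \<theta>0 \<xi> \<theta>"
    proof
      fix \<theta>
      show "lasso_obj A \<theta>0 \<xi> ?\<theta> \<le> lasso_obj A \<theta>0 \<xi> \<theta>"
        using growth[of \<theta>] pos_def_quad_form_nonneg[OF assms(1), of "\<theta> - ?\<theta>"] by linarith
    qed
  next
    fix \<theta> assume "\<forall>\<theta>'. lasso_obj A \<theta>0 \<xi> \<theta> \<le> lasso_obj A \<theta>0 \<xi> \<theta>'"
    then have "lasso_obj A \<theta>0 \<xi> \<theta> \<le> lasso_obj A \<theta>0 \<xi> ?\<theta>" ..
    then have "\<not> quad_form A (\<theta> - ?\<theta>) > 0" using growth[of \<theta>] by linarith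
    then show "\<theta> = ?\<theta>" using pos_def_quad_form_pos[OF assms(1), of "\<theta> - ?\<theta>"] by auto
  qed
qed

lemma sgn_add_small:
  fixes c d :: real
  assumes "\<bar>d\<bar> < \<bar>c\<bar>"
  shows "sgn (c + d) = sgn c"
  using assms by (cases "c > 0") (auto simp: sgn_if)

lemma sign_vec_add_small:
  assumes "\<xi> > 0" "\<And>i. \<theta>0 $ i \<noteq> 0 \<Longrightarrow> \<xi> * \<bar>z $ i\<bar> < \<bar>\<theta>0 $ i\<bar>"
  shows "sign_vec (\<theta>0 + \<xi> *\<^sub>R z) = (\<chi> i. if \<theta>0 $ i \<noteq> 0 then sgn (\<theta>0 $ i) else sgn (z $ i))"
  unfolding sign_vec_def vec_eq_iff
  using assms sgn_add_small[of "\<xi> * z $ _" "\<theta>0 $ _"] by (auto simp: abs_mult sgn_mult)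

lemma supp_sign_vec: "supp (sign_vec x) = supp x"
  by (simp add: supp_def sign_vec_def sgn_eq_0_iff)

lemma lasso_inf_sign_near_zero:
  fixes \<Sigma> :: "real^'n^'n"
  assumes "pos_def \<Sigma>" and bound: "\<And>i. \<bar>(\<Sigma> *v z) $ i\<bar> \<le> 1"
    and kkt: "\<And>i. v $ i \<noteq> 0 \<Longrightarrow> (\<Sigma> *v z) $ i = - v $ i"
    and v: "v = (\<chi> i. if \<theta>0 $ i \<noteq> 0 then sgn (\<theta>0 $ i) else sgn (z $ i))"
    and "\<xi> > 0" and small: "\<And>i. \<theta>0 $ i \<noteq> 0 \<Longrightarrow> \<xi> * \<bar>z $ i\<bar> < \<bar>\<theta>0 $ i\<bar>"
  shows "sign_vec (lasso_inf \<Sigma> \<theta>0 \<xi>) = v" "supp (lasso_inf \<Sigma> \<theta>0 \<xi>) = supp v"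
proof -
  have sign: "sign_vec (\<theta>0 + \<xi> *\<^sub>R z) = v"
    unfolding v using sign_vec_add_small \<open>\<xi> > 0\<close> small by blast
  then have "lasso_inf \<Sigma> \<theta>0 \<xi> = \<theta>0 + \<xi> *\<^sub>R z"
    using lasso_inf_eqI[OF assms(1) _ bound] kkt \<open>\<xi> > 0\<close>
    by (metis less_imp_le sgn_eq_0_iff sign_vec_def vec_lambda_beta)
  with sign show "sign_vec (lasso_inf \<Sigma> \<theta>0 \<xi>) = v" "supp (lasso_inf \<Sigma> \<theta>0 \<xi>) = supp v"
    by (metis supp_sign_vec)+
qed

lemma INF_ratio_pos:
  fixes \<theta>0 z :: "real^'n"
  assumes "\<And>i. i \<in> S \<Longrightarrow> \<theta>0 $ i \<noteq> 0"
  shows "0 < (INF i\<in>S. if z $ i = 0 then \<infinity> else ereal \<bar>\<theta>0 $ i / z $ i\<bar>)"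
proof -
  define f where "f i = (if z $ i = 0 then \<infinity> else ereal \<bar>\<theta>0 $ i / z $ i\<bar>)" for i
  have "0 < f i" if "i \<in> S" for i using assms that by (simp add: f_def)
  then have "0 < (INF i\<in>S. f i)"
    using finite_less_Inf_iff[of "f ` S" 0] by (cases "S = {}") (auto simp: top_ereal_def)
  then show ?thesis by (simp add: f_def)
qed

lemma less_INF_ratio_imp_mult_less:
  fixes \<theta>0 z :: "real^'n"
  assumes "ereal \<xi> < (INF i\<in>S. if z $ i = 0 then \<infinity> else ereal \<bar>\<theta>0 $ i / z $ i\<bar>)"
    and "i \<in> S" "\<theta>0 $ i \<noteq> 0"
  shows "\<xi> * \<bar>z $ i\<bar> < \<bar>\<theta>0 $ i\<bar>"
proof (cases "z $ i = 0")
  case False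
  have "ereal \<xi> < (if z $ i = 0 then \<infinity> else ereal \<bar>\<theta>0 $ i / z $ i\<bar>)"
    using less_le_trans[OF assms(1) INF_lower[OF assms(2)]] .
  with False show ?thesis by (simp add: abs_divide pos_less_divide_eq)
qed (use assms(3) in simp)

theorem lemma3p2:
  fixes \<Sigma> :: "real^'p^'p" and \<theta>0 :: "real^'p"
  assumes "pos_def \<Sigma>"
  shows "\<exists>(\<xi>0::ereal) (T0::'p set) (v0::real^'p).
           \<xi>0 > 0 \<and> (\<forall>i. v0 $ i \<in> {-1, 0, 1}) \<and>
           (\<forall>\<xi>::real. 0 < \<xi> \<and> ereal \<xi> < \<xi>0 \<longrightarrow>
               sign_vec (lasso_inf \<Sigma> \<theta>0 \<xi>) = v0 \<and>
               supp (lasso_inf \<Sigma> \<theta>0 \<xi>) = supp v0 \<and> supp v0 = T0) \<and>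
           supp \<theta>0 \<subseteq> T0 \<and>
           (\<forall>i\<in>supp \<theta>0. v0 $ i = sgn (\<theta>0 $ i)) \<and>
           \<xi>0 = (INF i\<in>supp \<theta>0.
                   (if sub_inv_apply \<Sigma> T0 v0 i = 0 then \<infinity>
                    else ereal \<bar>\<theta>0 $ i / sub_inv_apply \<Sigma> T0 v0 i\<bar>))"
proof -
  obtain z where bound: "\<And>i. \<bar>(\<Sigma> *v z) $ i\<bar> \<le> 1"
    and on_supp: "\<And>i. \<theta>0 $ i \<noteq> 0 \<Longrightarrow> (\<Sigma> *v z) $ i = - sgn (\<theta>0 $ i)"
    and off_supp: "\<And>i. \<theta>0 $ i = 0 \<Longrightarrow> z $ i \<noteq> 0 \<Longrightarrow> (\<Sigma> *v z) $ i = - sgn (z $ i)"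
    using exists_lasso_direction[OF assms, of "sign_vec \<theta>0"]
    by (auto simp: sign_vec_def abs_sgn_eq sgn_eq_0_iff)
  define v0 where "v0 = (\<chi> i. if \<theta>0 $ i \<noteq> 0 then sgn (\<theta>0 $ i) else sgn (z $ i))"
  define T0 where "T0 = supp v0"
  have T0: "i \<in> T0 \<longleftrightarrow> \<theta>0 $ i \<noteq> 0 \<or> z $ i \<noteq> 0" for i
    by (auto simp: T0_def supp_def v0_def sgn_eq_0_iff)
  have kkt: "(\<Sigma> *v z) $ i = - v0 $ i" if "v0 $ i \<noteq> 0" for i
    using that on_supp off_supp by (auto simp: v0_def sgn_eq_0_iff split: if_splits)
  have "sub_inv_apply \<Sigma> T0 v0 i = (- z) $ i" if "i \<in> T0" for i
  proof (rule sub_inv_apply_eqI[OF assms _ _ that])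
    show "(- z) $ j = 0" if "j \<notin> T0" for j using T0 that by simp
    show "(\<Sigma> *v - z) $ j = v0 $ j" if "j \<in> T0" for j
      using kkt that by (simp add: vec.neg T0_def supp_def)
  qed
  then have \<xi>0: "(INF i\<in>supp \<theta>0. if sub_inv_apply \<Sigma> T0 v0 i = 0 then \<infinity>
                    else ereal \<bar>\<theta>0 $ i / sub_inv_apply \<Sigma> T0 v0 i\<bar>)
      = (INF i\<in>supp \<theta>0. if z $ i = 0 then \<infinity> else ereal \<bar>\<theta>0 $ i / z $ i\<bar>)" (is "_ = ?\<xi>0")
    using T0 by (intro INF_cong) (auto simp: supp_def)
  have "sign_vec (lasso_inf \<Sigma> \<theta>0 \<xi>) = v0 \<and> supp (lasso_inf \<Sigma> \<theta>0 \<xi>) = supp v0"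
    if "0 < \<xi>" "ereal \<xi> < ?\<xi>0" for \<xi>
    using lasso_inf_sign_near_zero[OF assms bound kkt v0_def that(1)]
      less_INF_ratio_imp_mult_less[OF that(2)] by (simp add: supp_def)
  then show ?thesis
    using INF_ratio_pos[of "supp \<theta>0" \<theta>0 z] T0 \<xi>0
    by (intro exI[of _ ?\<xi>0] exI[of _ T0] exI[of _ v0]) (auto simp: T0_def supp_def v0_def sgn_if)
qed

end
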